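(* Let $q$ be a prime power, let $k < q$ and $t \geq 1$ be integers, and let $C(X) \in \mathbb{F}_q[X]$ be a nonzero polynomial of the form $$C(X) = \sum_{i=0}^{t-1} C_i(X)\Lambda^i(X),$$ where $\Lambda(X) = X^q - X$ and $\deg(C_i) \leq k$ for all $i$. Let $H(X) \in \mathbb{F}_q[X]$ be irreducible, and let $\mu$ be the largest integer such that $H(X)^\mu$ divides $C(X)$. Then $\mu \bmod q \in [0, k+t-1]$. *)

theory Defs
  imports "HOL-Library.Cardinality" "HOL-Computational_Algebra.Polynomial" "HOL-Computational_Algebra.Polynomial_Factorial"
begin

definition Lambda_poly :: "'a::{field,finite} poly" where
  "Lambda_poly = (monom 1 (CARD('a)) - [:0, 1:] :: 'a poly)"

end

theory Submission
  imports Defs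
begin

(* Work with Hasse derivatives D^(n) over F_q. Leibniz' rule makes the property
   "D^(n) f = 0 for w < n < q" behave additively in w under products; X^q and every q-th power
   have it with w = 0, so Lambda has it with w = 1 and C with w = k + t - 1. Write
   C = H^mu G with H not dividing G and mu = q m + r. For r < q the factor H^(q m) behaves like a
   constant under D^(r), and D^(r)(H^r G) is congruent to H'^r G modulo H. So if r > k + t - 1,
   then H divides H'^r G, hence H divides H'. This is impossible, because H' is nonzero (finite
   fields are perfect) and has smaller degree than H. *)

(* f(X + Y), as a polynomial in Y whose coefficients are polynomials in X *)
definition taylor_expansion :: "'a::comm_ring_1 poly \<Rightarrow> 'a poly poly" where
  "taylor_expansion f = map_poly (\<lambda>c. [:c:]) f \<circ>\<^sub>p [:[:0, 1:], 1:]"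

definition hasse_deriv :: "nat \<Rightarrow> 'a::comm_ring_1 poly \<Rightarrow> 'a poly" where
  "hasse_deriv n f = coeff (taylor_expansion f) n"

lemma taylor_expansion_0 [simp]: "taylor_expansion 0 = 0"
  by (simp add: taylor_expansion_def)

lemma taylor_expansion_pCons:
  "taylor_expansion (pCons c f) = [:[:c:]:] + [:[:0, 1:], 1:] * taylor_expansion f"
  by (simp add: taylor_expansion_def map_poly_pCons pcompose_pCons)

lemma taylor_expansion_add: "taylor_expansion (f + g) = taylor_expansion f + taylor_expansion g"
proof -
  have "map_poly (\<lambda>c. [:c:]) (f + g) = map_poly (\<lambda>c. [:c:]) f + map_poly (\<lambda>c. [:c:]) g"
    by (intro poly_eqI) (simp add: coeff_map_poly)
  then show ?thesis
    by (simp add: taylor_expansion_def pcompose_add)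
qed

lemma taylor_expansion_diff: "taylor_expansion (f - g) = taylor_expansion f - taylor_expansion g"
  using taylor_expansion_add [of "f - g" g] by (simp add: algebra_simps)

lemma taylor_expansion_smult: "taylor_expansion (smult c f) = [:[:c:]:] * taylor_expansion f"
  by (induction f) (simp_all add: taylor_expansion_pCons algebra_simps)

lemma taylor_expansion_mult: "taylor_expansion (f * g) = taylor_expansion f * taylor_expansion g"
proof (induction f)
  case (pCons c f)
  have "taylor_expansion (pCons c f * g) = taylor_expansion (smult c g + pCons 0 (f * g))"
    by simp
  also have "\<dots> = taylor_expansion (pCons c f) * taylor_expansion g"
    using pCons.IH
    by (simp add: taylor_expansion_add taylor_expansion_smult taylor_expansion_pCons
        algebra_simps del: pCons_0_0)
  finally show ?case .
qed simp

lemma taylor_expansion_power: "taylor_expansion (f ^ n) = taylor_expansion f ^ n"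
  by (induction n) (simp_all add: taylor_expansion_mult taylor_expansion_pCons one_pCons)

lemma degree_taylor_expansion_le: "degree (taylor_expansion f) \<le> degree f"
  using degree_pcompose_le [of "map_poly (\<lambda>c. [:c:]) f" "[:[:0, 1:], 1:]"]
  by (simp add: taylor_expansion_def degree_map_poly)

lemma coeff_0_taylor_expansion [simp]: "coeff (taylor_expansion f) 0 = f"
  by (induction f) (auto simp: taylor_expansion_pCons)

lemma hasse_deriv_0 [simp]: "hasse_deriv 0 f = f"
  by (simp add: hasse_deriv_def)

lemma hasse_deriv_of_0 [simp]: "hasse_deriv n 0 = 0"
  by (simp add: hasse_deriv_def)

lemma hasse_deriv_1: "hasse_deriv 1 (f :: 'a::idom poly) = pderiv f"
proof (induction f)
  case (pCons c f)
  have "hasse_deriv 1 (pCons c f) = [:0, 1:] * hasse_deriv 1 f + f"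
    by (simp add: hasse_deriv_def taylor_expansion_pCons)
  with pCons.IH show ?case
    by (simp add: pderiv_pCons)
qed (simp add: hasse_deriv_def)

lemma hasse_deriv_eq_0_if_degree_less: "degree f < n \<Longrightarrow> hasse_deriv n f = 0"
  using degree_taylor_expansion_le [of f] by (simp add: hasse_deriv_def coeff_eq_0)

lemma hasse_deriv_add: "hasse_deriv n (f + g) = hasse_deriv n f + hasse_deriv n g"
  by (simp add: hasse_deriv_def taylor_expansion_add)

lemma hasse_deriv_diff: "hasse_deriv n (f - g) = hasse_deriv n f - hasse_deriv n g"
  by (simp add: hasse_deriv_def taylor_expansion_diff)

lemma hasse_deriv_mult:
  "hasse_deriv n (f * g) = (\<Sum>i\<le>n. hasse_deriv i f * hasse_deriv (n - i) g)"
  by (simp add: hasse_deriv_def taylor_expansion_mult coeff_mult)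

lemma taylor_expansion_eq_pCons:
  fixes f :: "'a::idom poly"
  obtains S where "taylor_expansion f = pCons f S" and "coeff S 0 = pderiv f"
proof (cases "taylor_expansion f")
  case (pCons a S)
  have "coeff (taylor_expansion f) 0 = f" and "coeff (taylor_expansion f) 1 = pderiv f"
    using hasse_deriv_1 [of f] by (simp_all add: hasse_deriv_def)
  with pCons have "a = f" and "coeff S 0 = pderiv f"
    by simp_all
  with pCons that show ?thesis
    by blast
qed

lemma hasse_deriv_power_mult_mod:
  fixes H G :: "'a::idom poly"
  shows "H dvd hasse_deriv n (H ^ n * G) - pderiv H ^ n * G"
proof -
  obtain S where TH: "taylor_expansion H = pCons H S" and S0: "coeff S 0 = pderiv H"
    by (rule taylor_expansion_eq_pCons)
  \<comment> \<open>Modulo \<open>H\<close>, the expansion of \<open>H\<close> is \<open>Y S\<close> with \<open>S(0) = H'\<close>.\<close>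
  define YS where "YS = [:0, 1:] * S"
  have "taylor_expansion H - YS = [:H:]"
    by (simp add: TH YS_def)
  then have "[:H:] dvd taylor_expansion H ^ n - YS ^ n"
    using power_diff_sumr2 [of "taylor_expansion H" n YS] by (metis dvd_triv_left)
  then obtain P where "taylor_expansion H ^ n = YS ^ n + [:H:] * P"
    by (auto simp: dvd_def algebra_simps)
  moreover have "YS ^ n = monom 1 n * S ^ n"
    unfolding YS_def power_mult_distrib by (simp add: monom_altdef)
  ultimately have "taylor_expansion (H ^ n * G)
      = monom 1 n * (S ^ n * taylor_expansion G) + smult H (P * taylor_expansion G)"
    by (simp add: taylor_expansion_mult taylor_expansion_power distrib_right mult.assoc)
  then have "hasse_deriv n (H ^ n * G) = pderiv H ^ n * G + H * coeff (P * taylor_expansion G) n"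
    by (simp add: hasse_deriv_def coeff_monom_mult coeff_mult_0 coeff_0_power S0)
  then show ?thesis
    by simp
qed

lemma power_card_eq_self:
  fixes x :: "'a::{field,finite}"
  shows "x ^ CARD('a) = x"
proof (cases "x = 0")
  case False
  let ?U = "UNIV - {0 :: 'a}"
  have "inj_on ((*) x) ?U"
    using False by (auto intro: inj_onI)
  moreover have "(*) x ` ?U = ?U"
  proof
    show "?U \<subseteq> (*) x ` ?U"
    proof
      fix y assume "y \<in> ?U"
      with False have "y = x * (y / x)" and "y / x \<in> ?U"
        by simp_all
      then show "y \<in> (*) x ` ?U"
        by blast
    qed
  qed (use False in auto)
  ultimately have "(\<Prod>y\<in>?U. x * y) = \<Prod>?U"
    using prod.reindex [of "(*) x" ?U id] by simp
  then have "x ^ card ?U * \<Prod>?U = 1 * \<Prod>?U"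
    by (simp add: prod.distrib)
  moreover have "\<Prod>?U \<noteq> 0"
    by simp
  ultimately have "x ^ (CARD('a) - 1) = 1"
    by (simp add: card_Diff_singleton)
  moreover have "CARD('a) = Suc (CARD('a) - 1)"
    using finite_UNIV_card_ge_0 [where 'a = 'a] by simp
  ultimately show ?thesis
    by (metis mult_1_right power_Suc)
qed (simp add: finite_UNIV_card_ge_0)

lemma card_choose_eq_0:
  assumes "0 < k" and "k < CARD('a::{field,finite})"
  shows "of_nat (CARD('a) choose k) = (0 :: 'a)"
proof -
  let ?q = "CARD('a)"
  have "?q \<ge> 2"
    using card_mono [of UNIV "{0 :: 'a, 1}"] by simp
  \<comment> \<open>Both sides are monic of degree \<open>q\<close> and agree at all \<open>q\<close> points.\<close>
  have "[:1, 1:] ^ ?q = (monom 1 ?q + 1 :: 'a poly)"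
  proof (rule poly_eqI_degree_lead_coeff [where n = ?q and A = UNIV])
    show "coeff ([:1, 1:] ^ ?q) ?q = coeff (monom 1 ?q + 1 :: 'a poly) ?q"
      using \<open>?q \<ge> 2\<close> by (simp add: coeff_linear_power)
    show "degree ([:1, 1:] ^ ?q :: 'a poly) \<le> ?q"
      by (simp add: degree_linear_power)
    show "degree (monom 1 ?q + 1 :: 'a poly) \<le> ?q"
      by (intro degree_add_le) (simp_all add: degree_monom_le)
    show "poly ([:1, 1:] ^ ?q) z = poly (monom 1 ?q + 1) z" for z :: 'a
      by (simp add: poly_monom power_card_eq_self add.commute)
  qed simp
  then have "coeff ([:1, 1:] ^ ?q) k = coeff (monom 1 ?q + 1 :: 'a poly) k"
    by simp
  with assms show ?thesis
    by (simp add: coeff_linear_poly_power)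
qed

lemma power_add_eq_power_add_power:
  fixes x y :: "'b::comm_semiring_1"
  assumes "0 < n" and "\<And>k. 0 < k \<Longrightarrow> k < n \<Longrightarrow> of_nat (n choose k) = (0 :: 'b)"
  shows "(x + y) ^ n = x ^ n + y ^ n"
proof -
  have "(x + y) ^ n = (\<Sum>k\<le>n. of_nat (n choose k) * x ^ k * y ^ (n - k))"
    by (rule binomial_ring)
  also have "\<dots> = (\<Sum>k\<in>{0, n}. of_nat (n choose k) * x ^ k * y ^ (n - k))"
    using assms(2) by (intro sum.mono_neutral_right) auto
  finally show ?thesis
    using assms(1) by (simp add: add.commute)
qed

lemma hasse_deriv_power_card:
  fixes f :: "'a::{field,finite} poly"
  assumes "0 < n" and "n < CARD('a)"
  shows "hasse_deriv n (f ^ CARD('a)) = 0"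
proof -
  let ?q = "CARD('a)"
  have frobenius: "(a + b) ^ ?q = a ^ ?q + b ^ ?q" for a b :: "'a poly poly"
    using assms card_choose_eq_0 [where 'a = 'a]
    by (intro power_add_eq_power_add_power) (simp_all add: of_nat_poly)
  obtain S where "taylor_expansion f = pCons f S"
    by (rule taylor_expansion_eq_pCons)
  then have "taylor_expansion f = [:f:] + [:0, 1:] * S"
    by simp
  then have "taylor_expansion (f ^ ?q) = [:f:] ^ ?q + ([:0, 1:] * S) ^ ?q"
    by (simp only: taylor_expansion_power frobenius)
  also have "\<dots> = [:f ^ ?q:] + monom 1 ?q * S ^ ?q"
    by (simp only: poly_const_pow power_mult_distrib) (simp add: monom_altdef)
  finally show ?thesis
    using assms by (simp add: hasse_deriv_def coeff_monom_mult coeff_pCons split: nat.split)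
qed

lemma surj_power_char:
  "surj (\<lambda>x :: 'a::{field,finite}. x ^ CHAR('a))"
proof (rule finite_UNIV_inj_surj)
  have "prime CHAR('a)"
    by (intro prime_CHAR_semidom finite_imp_CHAR_pos) simp
  show "inj (\<lambda>x :: 'a. x ^ CHAR('a))"
  proof (rule injI)
    fix x y :: 'a
    assume "x ^ CHAR('a) = y ^ CHAR('a)"
    moreover have "(x - y + y) ^ CHAR('a) = (x - y) ^ CHAR('a) + y ^ CHAR('a)"
      using \<open>prime CHAR('a)\<close> by (intro freshmans_dream) simp_all
    ultimately show "x = y"
      by simp
  qed
qed simp

lemma pderiv_eq_0_imp_power_char:
  fixes f :: "'a::{field,finite} poly"
  assumes "pderiv f = 0"
  obtains g where "f = g ^ CHAR('a)"
proof -
  let ?p = "CHAR('a)"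
  have "prime ?p"
    by (intro prime_CHAR_semidom finite_imp_CHAR_pos) simp
  have char_dvd: "?p dvd j" if "coeff f j \<noteq> 0" for j
  proof (cases j)
    case (Suc i)
    have "of_nat (Suc i) * coeff f (Suc i) = 0"
      using assms coeff_pderiv [of f i] by simp
    with that Suc show ?thesis
      using of_nat_eq_0_iff_char_dvd by fastforce
  qed simp
  define root where "root = inv (\<lambda>x :: 'a. x ^ ?p)"
  have root: "root c ^ ?p = c" for c
    unfolding root_def using surj_f_inv_f [OF surj_power_char] by metis
  define g where "g = (\<Sum>j\<le>degree f. monom (root (coeff f j)) (j div ?p))"
  have "g ^ ?p = (\<Sum>j\<le>degree f. monom (root (coeff f j)) (j div ?p) ^ ?p)"
    unfolding g_def using \<open>prime ?p\<close> by (intro freshmans_dream_sum) simp_all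
  also have "\<dots> = (\<Sum>j\<le>degree f. monom (coeff f j) j)"
  proof (rule sum.cong [OF refl])
    fix j
    show "monom (root (coeff f j)) (j div ?p) ^ ?p = monom (coeff f j) j"
      using char_dvd [of j] by (cases "coeff f j = 0") (simp_all add: monom_power root)
  qed
  finally have "f = g ^ ?p"
    by (simp add: poly_as_sum_of_monoms)
  then show ?thesis
    by (rule that)
qed

lemma irreducible_imp_pderiv_neq_0:
  fixes f :: "'a::{field,finite} poly"
  assumes "irreducible f"
  shows "pderiv f \<noteq> 0"
proof
  assume "pderiv f = 0"
  then obtain g where "f = g ^ CHAR('a)"
    by (rule pderiv_eq_0_imp_power_char)
  with assms have "CHAR('a) = 1"
    by (simp add: irreducible_power_iff)
  moreover have "prime CHAR('a)"
    by (intro prime_CHAR_semidom finite_imp_CHAR_pos) simp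
  ultimately show False
    by simp
qed

lemma irreducible_not_dvd_pderiv:
  fixes f :: "'a::{field,finite} poly"
  assumes "irreducible f"
  shows "\<not> f dvd pderiv f"
proof
  assume "f dvd pderiv f"
  then have "degree f \<le> degree (pderiv f)"
    using assms by (intro dvd_imp_degree_le irreducible_imp_pderiv_neq_0)
  also have "degree (pderiv f) \<le> degree f - 1"
    by (rule degree_le) (auto simp: coeff_pderiv coeff_eq_0)
  finally have "degree f = 0"
    by simp
  then have "pderiv f = 0"
    by (intro poly_eqI) (simp add: coeff_pderiv coeff_eq_0)
  with irreducible_imp_pderiv_neq_0 [OF assms] show False
    by contradiction
qed

definition hasse_gap :: "nat \<Rightarrow> nat \<Rightarrow> 'a::comm_ring_1 poly \<Rightarrow> bool" where
  "hasse_gap w q f \<longleftrightarrow> (\<forall>n. w < n \<longrightarrow> n < q \<longrightarrow> hasse_deriv n f = 0)"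

lemma hasse_gap_mono: "hasse_gap w q f \<Longrightarrow> w \<le> w' \<Longrightarrow> hasse_gap w' q f"
  by (simp add: hasse_gap_def)

lemma hasse_gap_degree: "degree f \<le> w \<Longrightarrow> hasse_gap w q f"
  by (simp add: hasse_gap_def hasse_deriv_eq_0_if_degree_less)

lemma hasse_gap_diff: "hasse_gap w q f \<Longrightarrow> hasse_gap w q g \<Longrightarrow> hasse_gap w q (f - g)"
  by (simp add: hasse_gap_def hasse_deriv_diff)

lemma hasse_gap_sum:
  "(\<And>i. i \<in> I \<Longrightarrow> hasse_gap w q (f i)) \<Longrightarrow> hasse_gap w q (\<Sum>i\<in>I. f i)"
  by (induction I rule: infinite_finite_induct)
    (simp_all add: hasse_gap_def hasse_deriv_add)

lemma hasse_gap_mult: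
  assumes "hasse_gap v q f" and "hasse_gap w q g"
  shows "hasse_gap (v + w) q (f * g)"
  unfolding hasse_gap_def
proof (intro allI impI)
  fix n assume "v + w < n" and "n < q"
  have "hasse_deriv i f * hasse_deriv (n - i) g = 0" if "i \<le> n" for i
  proof (cases "v < i")
    case True
    with assms(1) \<open>n < q\<close> that show ?thesis
      by (simp add: hasse_gap_def)
  next
    case False
    with assms(2) \<open>v + w < n\<close> \<open>n < q\<close> show ?thesis
      by (simp add: hasse_gap_def)
  qed
  then show "hasse_deriv n (f * g) = 0"
    by (simp add: hasse_deriv_mult)
qed

lemma hasse_gap_power: "hasse_gap w q f \<Longrightarrow> hasse_gap (m * w) q (f ^ m)"
  by (induction m) (simp_all add: hasse_gap_degree hasse_gap_mult)

lemma hasse_gap_power_card: "hasse_gap 0 CARD('a) (f ^ CARD('a) :: 'a::{field,finite} poly)"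
  by (simp add: hasse_gap_def hasse_deriv_power_card)

lemma hasse_gap_Lambda_poly: "hasse_gap 1 CARD('a) (Lambda_poly :: 'a::{field,finite} poly)"
proof -
  have "hasse_gap 1 CARD('a) ([:0, 1:] ^ CARD('a) - [:0, 1 :: 'a:])"
    by (intro hasse_gap_diff hasse_gap_mono [OF hasse_gap_power_card] hasse_gap_degree) simp_all
  then show ?thesis
    by (simp add: Lambda_poly_def monom_altdef)
qed

lemma hasse_gap_Lambda_expansion:
  fixes Cs :: "nat \<Rightarrow> 'a::{field,finite} poly"
  assumes "\<forall>i<t. degree (Cs i) \<le> k"
  shows "hasse_gap (k + t - 1) CARD('a) (\<Sum>i<t. Cs i * Lambda_poly ^ i)"
proof (rule hasse_gap_sum)
  fix i assume "i \<in> {..<t}"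
  then have "hasse_gap (k + i * 1) CARD('a) (Cs i * Lambda_poly ^ i)"
    using assms by (intro hasse_gap_mult hasse_gap_degree hasse_gap_power hasse_gap_Lambda_poly) simp
  with \<open>i \<in> {..<t}\<close> show "hasse_gap (k + t - 1) CARD('a) (Cs i * Lambda_poly ^ i)"
    by (auto elim: hasse_gap_mono)
qed

lemma hasse_deriv_mult_hasse_gap_0:
  assumes "hasse_gap 0 q f" and "n < q"
  shows "hasse_deriv n (f * g) = f * hasse_deriv n g"
proof -
  have "hasse_deriv i f * hasse_deriv (n - i) g = 0" if "i \<in> {..n} - {0}" for i
    using assms that by (simp add: hasse_gap_def)
  then have "hasse_deriv n (f * g) = (\<Sum>i\<in>{0}. hasse_deriv i f * hasse_deriv (n - i) g)"
    unfolding hasse_deriv_mult by (intro sum.mono_neutral_right) auto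
  then show ?thesis
    by simp
qed

lemma multiplicity_mod_card_le_hasse_gap:
  fixes C H G :: "'a::{field,finite} poly"
  assumes gap: "hasse_gap w CARD('a) C"
    and "C = H ^ \<mu> * G" and "irreducible H" and "\<not> H dvd G"
  shows "\<mu> mod CARD('a) \<le> w"
proof (rule ccontr)
  let ?q = "CARD('a)" and ?r = "\<mu> mod CARD('a)"
  assume "\<not> ?r \<le> w"
  moreover have "?r < ?q"
    using finite_UNIV_card_ge_0 [where 'a = 'a] by simp
  ultimately have "hasse_deriv ?r C = 0"
    using gap by (simp add: hasse_gap_def)
  moreover have "C = (H ^ (\<mu> div ?q)) ^ ?q * (H ^ ?r * G)"
    using assms(2) by (simp add: mult.assoc flip: power_mult power_add)
  ultimately have "(H ^ (\<mu> div ?q)) ^ ?q * hasse_deriv ?r (H ^ ?r * G) = 0"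
    using hasse_deriv_mult_hasse_gap_0 [OF hasse_gap_power_card \<open>?r < ?q\<close>] by metis
  then have "hasse_deriv ?r (H ^ ?r * G) = 0"
    using assms(3) by auto
  then have "H dvd pderiv H ^ ?r * G"
    using hasse_deriv_power_mult_mod [of H ?r G] by simp
  with assms(3,4) have "H dvd pderiv H"
    by (metis field_poly_irreducible_imp_prime prime_elem_dvd_mult_iff prime_elem_dvd_power)
  with irreducible_not_dvd_pderiv [OF assms(3)] show False
    by contradiction
qed

theorem lemma3p3:
  fixes C H :: "'a::{field,finite} poly"
    and Cs :: "nat \<Rightarrow> 'a poly"
    and k t \<mu> :: nat
  assumes "k < CARD('a)"
    and "t \<ge> 1"
    and "C \<noteq> 0"
    and "C = (\<Sum>i<t. Cs i * Lambda_poly ^ i)"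
    and "\<forall>i<t. degree (Cs i) \<le> k"
    and "irreducible H"
    and "H ^ \<mu> dvd C"
    and "\<not> H ^ (Suc \<mu>) dvd C"
  shows "\<mu> mod CARD('a) \<le> k + t - 1"
proof -
  obtain G where G: "C = H ^ \<mu> * G"
    using assms(7) by blast
  with assms(8) have "\<not> H dvd G"
    by (auto simp: mult.assoc mult.left_commute)
  have "hasse_gap (k + t - 1) CARD('a) C"
    using hasse_gap_Lambda_expansion [OF assms(5)] assms(4) by simp
  then show ?thesis
    using G assms(6) \<open>\<not> H dvd G\<close> by (rule multiplicity_mod_card_le_hasse_gap)
qed

end
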